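(* The following non-implications hold; each item asserts the existence of a probability space $(\Omega,\mathcal{F},P)$ and real random variables $X, X_1, X_2, \dots$ on it with the stated properties. (i) There exist such $X,X_n$ with $X_n\xrightarrow{S_1\text{-}d}X$ but not $X_n\xrightarrow{S_2\text{-}d}X$; and there exist such $X,X_n$ with $X_n\xrightarrow{S_2\text{-}d}X$ but not $X_n\xrightarrow{S_1\text{-}d}X$. (ii) There exist such $X,X_n$ with $X_n\xrightarrow{S\text{-}L^\infty}X$ but not $X_n\xrightarrow{S_2\text{-}d}X$. (iii) There exist such $X,X_n$ with $X_n\xrightarrow{S\text{-}L^1}X$ but not $X_n\xrightarrow{S_2\text{-}d}X$. (iv) For every $\alpha>0$ there exist such $X,X_n$ with $X_n\xrightarrow{S_\alpha\text{-}a.s.}X$ but not $X_n\xrightarrow{S_1\text{-}d}X$. (v) For each $i\in\{1,2\}$ there exist such $X,X_n$ with $X_n$ converging completely to $X$ but not $X_n\xrightarrow{S_i\text{-}d}X$.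
   Context: Let $X,X_1,X_2,\dots$ be real random variables on a probability space $(\Omega,\mathcal{F},P)$, and let $F_n(x)=P(X_n\le x)$ and $F(x)=P(X\le x)$ be their distribution functions. - Complete convergence: for every $\varepsilon>0$, $\sum_{n=1}^\infty P(|X_n-X|\ge\varepsilon)<\infty$. - $X_n\xrightarrow{S\text{-}L^p}X$ ($p>0$): $\sum_{n=1}^\infty E[|X_n-X|^p]<\infty$. - $X_n\xrightarrow{S\text{-}L^\infty}X$: $\sum_{n=1}^\infty \|X_n-X\|_\infty<\infty$, where $\|\cdot\|_\infty$ is the essential supremum norm. - $X_n\xrightarrow{S_\alpha\text{-}a.s.}X$ ($\alpha>0$): $\sum_{n=1}^\infty |X_n-X|^\alpha<\infty$ almost surely. - $X_n\xrightarrow{S_1\text{-}d}X$: for every bounded Lipschitz continuous $f:\mathbb{R}\to\mathbb{R}$, $\sum_{n=1}^\infty |E[f(X_n)-f(X)]|<\infty$. - $X_n\xrightarrow{S_2\text{-}d}X$: for every continuity point $x$ of $F$, $\sum_{n=1}^\infty |F_n(x)-F(x)|<\infty$. *)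

theory Defs
  imports "HOL-Probability.Probability"
begin

text \<open>Standing setting: a probability space M with real random variables X and
  X_n (indexed by nat; starting the index at 0 instead of 1 does not affect any
  of the summability conditions).\<close>

definition rv_setting :: "'a measure \<Rightarrow> ('a \<Rightarrow> real) \<Rightarrow> (nat \<Rightarrow> 'a \<Rightarrow> real) \<Rightarrow> bool" where
  "rv_setting M X Xs \<longleftrightarrow> prob_space M \<and> X \<in> borel_measurable M \<and> (\<forall>n. Xs n \<in> borel_measurable M)"

definition complete_conv :: "'a measure \<Rightarrow> (nat \<Rightarrow> 'a \<Rightarrow> real) \<Rightarrow> ('a \<Rightarrow> real) \<Rightarrow> bool" where
  "complete_conv M Xs X \<longleftrightarrow>
     (\<forall>\<epsilon>>0. summable (\<lambda>n. measure M {\<omega>\<in>space M. \<bar>Xs n \<omega> - X \<omega>\<bar> \<ge> \<epsilon>}))"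

definition S_Lp_conv :: "real \<Rightarrow> 'a measure \<Rightarrow> (nat \<Rightarrow> 'a \<Rightarrow> real) \<Rightarrow> ('a \<Rightarrow> real) \<Rightarrow> bool" where
  "S_Lp_conv p M Xs X \<longleftrightarrow>
     (\<Sum>n. \<integral>\<^sup>+ \<omega>. ennreal (\<bar>Xs n \<omega> - X \<omega>\<bar> powr p) \<partial>M) < \<infinity>"

definition S_Linf_conv :: "'a measure \<Rightarrow> (nat \<Rightarrow> 'a \<Rightarrow> real) \<Rightarrow> ('a \<Rightarrow> real) \<Rightarrow> bool" where
  "S_Linf_conv M Xs X \<longleftrightarrow>
     (\<forall>n. esssup M (\<lambda>\<omega>. ereal \<bar>Xs n \<omega> - X \<omega>\<bar>) < \<infinity>) \<and>
     summable (\<lambda>n. real_of_ereal (esssup M (\<lambda>\<omega>. ereal \<bar>Xs n \<omega> - X \<omega>\<bar>)))"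

definition S_as_conv :: "real \<Rightarrow> 'a measure \<Rightarrow> (nat \<Rightarrow> 'a \<Rightarrow> real) \<Rightarrow> ('a \<Rightarrow> real) \<Rightarrow> bool" where
  "S_as_conv \<alpha> M Xs X \<longleftrightarrow> (AE \<omega> in M. summable (\<lambda>n. \<bar>Xs n \<omega> - X \<omega>\<bar> powr \<alpha>))"

definition S1_d_conv :: "'a measure \<Rightarrow> (nat \<Rightarrow> 'a \<Rightarrow> real) \<Rightarrow> ('a \<Rightarrow> real) \<Rightarrow> bool" where
  "S1_d_conv M Xs X \<longleftrightarrow>
     (\<forall>f::real \<Rightarrow> real. bounded (range f) \<and> (\<exists>L. \<forall>x y. \<bar>f x - f y\<bar> \<le> L * \<bar>x - y\<bar>) \<longrightarrow>
        summable (\<lambda>n. \<bar>(\<integral>\<omega>. f (Xs n \<omega>) \<partial>M) - (\<integral>\<omega>. f (X \<omega>) \<partial>M)\<bar>))"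

definition cdf_of :: "'a measure \<Rightarrow> ('a \<Rightarrow> real) \<Rightarrow> real \<Rightarrow> real" where
  "cdf_of M Y x = measure M {\<omega>\<in>space M. Y \<omega> \<le> x}"

definition S2_d_conv :: "'a measure \<Rightarrow> (nat \<Rightarrow> 'a \<Rightarrow> real) \<Rightarrow> ('a \<Rightarrow> real) \<Rightarrow> bool" where
  "S2_d_conv M Xs X \<longleftrightarrow>
     (\<forall>x. isCont (cdf_of M X) x \<longrightarrow> summable (\<lambda>n. \<bar>cdf_of M (Xs n) x - cdf_of M X x\<bar>))"

end

theory Submission
  imports Defs
begin

text \<open>All counterexamples live on \<open>[0,1]\<close> with Lebesgue measure and are driven by the rate
  \<open>a\<^sub>n = 1/(n+1)\<close>, which is not summable although \<open>a\<^sub>n\<^sup>2\<close> is.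

  Shifting \<open>X(\<omega>) = \<omega>\<^sup>2\<close> by the deterministic amount \<open>a\<^sub>n\<^sup>2\<close> makes every mode controlled by
  \<open>|X\<^sub>n - X|\<close> summable, \<open>S\<^sub>1-d\<close> included via the Lipschitz constant of the test function. But
  the density of \<open>\<omega>\<^sup>2\<close> blows up at 0, so at the continuity point 0 we get
  \<open>F\<^sub>n(0) - F(0) = P(\<omega> \<le> a\<^sub>n) = a\<^sub>n\<close>.

  The constants \<open>X\<^sub>n = a\<^sub>n\<close> converge to 0 uniformly, and in \<open>S\<^sub>2-d\<close> because at every continuity
  point \<open>x \<noteq> 0\<close> the distribution functions eventually agree; the indicators of \<open>(0, a\<^sub>n]\<close>
  vanish eventually at every point. Yet under both, the clamp to \<open>[0,1]\<close> has expectation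
  \<open>a\<^sub>n\<close>, so \<open>S\<^sub>1-d\<close> fails.\<close>

lemma summable_if_eventually_zero:
  fixes f :: "nat \<Rightarrow> 'a::real_normed_vector"
  assumes "\<forall>\<^sub>F n in sequentially. f n = 0"
  shows "summable f"
  using summable_cong[OF assms] by simp

lemma cdf_of_eq_cdf_distr:
  assumes "X \<in> borel_measurable M"
  shows "cdf_of M X = cdf (distr M borel X)"
proof
  fix x
  have "X -` {..x} \<inter> space M = {\<omega>\<in>space M. X \<omega> \<le> x}" by auto
  then show "cdf_of M X x = cdf (distr M borel X) x"
    using assms by (simp add: cdf_of_def cdf_def measure_distr)
qed

lemma isCont_cdf_of_iff:
  assumes "prob_space M" and X: "X \<in> borel_measurable M"
  shows "isCont (cdf_of M X) x \<longleftrightarrow> measure M {\<omega>\<in>space M. X \<omega> = x} = 0"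
proof -
  interpret prob_space M by fact
  interpret D: real_distribution "distr M borel X" using X by simp
  have "X -` {x} \<inter> space M = {\<omega>\<in>space M. X \<omega> = x}" by auto
  then show ?thesis
    using X by (simp add: cdf_of_eq_cdf_distr D.isCont_cdf measure_distr)
qed

lemma cdf_of_const:
  assumes "prob_space M"
  shows "cdf_of M (\<lambda>_. c) x = (if c \<le> x then 1 else 0)"
  using prob_space.prob_space[OF assms] by (simp add: cdf_of_def)

lemma cdf_of_diff_const: "cdf_of M (\<lambda>\<omega>. X \<omega> - c) x = cdf_of M X (x + c)"
  by (simp add: cdf_of_def diff_le_eq)

lemma S2_d_conv_const:
  assumes M: "prob_space M" and d: "d \<longlonglongrightarrow> c"
  shows "S2_d_conv M (\<lambda>n _. d n) (\<lambda>_. c)"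
  unfolding S2_d_conv_def
proof (intro allI impI)
  fix x assume "isCont (cdf_of M (\<lambda>_. c)) x"
  then have "x \<noteq> c"
    using M prob_space.prob_space[OF M] by (auto simp: isCont_cdf_of_iff)
  then have "\<forall>\<^sub>F n in sequentially. (d n \<le> x \<longleftrightarrow> c \<le> x)"
  proof (cases "x < c")
    case True
    show ?thesis using order_tendstoD(1)[OF d True] True by (auto elim: eventually_mono)
  next
    case False
    with \<open>x \<noteq> c\<close> have "c < x" by simp
    show ?thesis using order_tendstoD(2)[OF d \<open>c < x\<close>] \<open>c < x\<close> by (auto elim: eventually_mono)
  qed
  then have "\<forall>\<^sub>F n in sequentially. \<bar>cdf_of M (\<lambda>_. d n) x - cdf_of M (\<lambda>_. c) x\<bar> = 0"
    by eventually_elim (simp add: cdf_of_const[OF M])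
  then show "summable (\<lambda>n. \<bar>cdf_of M (\<lambda>_. d n) x - cdf_of M (\<lambda>_. c) x\<bar>)"
    by (rule summable_if_eventually_zero)
qed

lemma complete_conv_if_uniform_bound:
  assumes bound: "\<And>n \<omega>. \<omega> \<in> space M \<Longrightarrow> \<bar>Xs n \<omega> - X \<omega>\<bar> \<le> c n" and c: "c \<longlonglongrightarrow> 0"
  shows "complete_conv M Xs X"
  unfolding complete_conv_def
proof (intro allI impI)
  fix \<epsilon> :: real assume "\<epsilon> > 0"
  then have "\<forall>\<^sub>F n in sequentially. c n < \<epsilon>" using order_tendstoD(2)[OF c] by blast
  then have "\<forall>\<^sub>F n in sequentially. measure M {\<omega>\<in>space M. \<bar>Xs n \<omega> - X \<omega>\<bar> \<ge> \<epsilon>} = 0"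
  proof eventually_elim
    case (elim n)
    then have "{\<omega>\<in>space M. \<bar>Xs n \<omega> - X \<omega>\<bar> \<ge> \<epsilon>} = {}"
      using bound[of _ n] by fastforce
    then show ?case by (metis measure_empty)
  qed
  then show "summable (\<lambda>n. measure M {\<omega>\<in>space M. \<bar>Xs n \<omega> - X \<omega>\<bar> \<ge> \<epsilon>})"
    by (rule summable_if_eventually_zero)
qed

lemma S_Linf_conv_if_summable_bound:
  assumes rv: "rv_setting M X Xs"
    and bound: "\<And>n \<omega>. \<omega> \<in> space M \<Longrightarrow> \<bar>Xs n \<omega> - X \<omega>\<bar> \<le> c n" and c: "summable c"
  shows "S_Linf_conv M Xs X"
proof -
  interpret prob_space M using rv by (simp add: rv_setting_def)
  have [measurable]: "X \<in> borel_measurable M" "Xs n \<in> borel_measurable M" for n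
    using rv by (auto simp: rv_setting_def)
  have esssup_bounds: "0 \<le> esssup M (\<lambda>\<omega>. ereal \<bar>Xs n \<omega> - X \<omega>\<bar>)"
    "esssup M (\<lambda>\<omega>. ereal \<bar>Xs n \<omega> - X \<omega>\<bar>) \<le> c n" for n
  proof -
    have "esssup M (\<lambda>_. 0::ereal) \<le> esssup M (\<lambda>\<omega>. ereal \<bar>Xs n \<omega> - X \<omega>\<bar>)"
      by (rule esssup_mono) auto
    then show "0 \<le> esssup M (\<lambda>\<omega>. ereal \<bar>Xs n \<omega> - X \<omega>\<bar>)"
      by (simp add: esssup_const emeasure_space_1)
    show "esssup M (\<lambda>\<omega>. ereal \<bar>Xs n \<omega> - X \<omega>\<bar>) \<le> c n"
      using bound by (intro esssup_I) auto
  qed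
  have "summable (\<lambda>n. real_of_ereal (esssup M (\<lambda>\<omega>. ereal \<bar>Xs n \<omega> - X \<omega>\<bar>)))"
  proof (rule summable_comparison_test'[OF c])
    fix n
    show "norm (real_of_ereal (esssup M (\<lambda>\<omega>. ereal \<bar>Xs n \<omega> - X \<omega>\<bar>))) \<le> c n"
      using esssup_bounds[of n] by (cases "esssup M (\<lambda>\<omega>. ereal \<bar>Xs n \<omega> - X \<omega>\<bar>)") auto
  qed
  moreover have "esssup M (\<lambda>\<omega>. ereal \<bar>Xs n \<omega> - X \<omega>\<bar>) < \<infinity>" for n
    using esssup_bounds(2)[of n] by (auto intro: le_less_trans)
  ultimately show ?thesis unfolding S_Linf_conv_def by blast
qed

lemma S_Lp_conv_if_summable_bound:
  assumes "prob_space M" "0 \<le> p"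
    and bound: "\<And>n \<omega>. \<omega> \<in> space M \<Longrightarrow> \<bar>Xs n \<omega> - X \<omega>\<bar> \<le> c n"
    and c: "summable (\<lambda>n. c n powr p)"
  shows "S_Lp_conv p M Xs X"
proof -
  interpret prob_space M by fact
  have "(\<integral>\<^sup>+ \<omega>. ennreal (\<bar>Xs n \<omega> - X \<omega>\<bar> powr p) \<partial>M) \<le> ennreal (c n powr p)" for n
  proof -
    have "(\<integral>\<^sup>+ \<omega>. ennreal (\<bar>Xs n \<omega> - X \<omega>\<bar> powr p) \<partial>M) \<le> (\<integral>\<^sup>+ \<omega>. ennreal (c n powr p) \<partial>M)"
    proof (rule nn_integral_mono)
      fix \<omega> assume \<omega>: "\<omega> \<in> space M"
      show "ennreal (\<bar>Xs n \<omega> - X \<omega>\<bar> powr p) \<le> ennreal (c n powr p)"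
        using bound[OF \<omega>] \<open>0 \<le> p\<close> by (intro ennreal_leI powr_mono2) auto
    qed
    then show ?thesis by (simp add: emeasure_space_1)
  qed
  then have "(\<Sum>n. \<integral>\<^sup>+ \<omega>. ennreal (\<bar>Xs n \<omega> - X \<omega>\<bar> powr p) \<partial>M) \<le> (\<Sum>n. ennreal (c n powr p))"
    by (rule suminf_le) simp_all
  also have "\<dots> < \<infinity>"
  proof -
    have "(\<Sum>n. ennreal (c n powr p)) \<noteq> top"
      by (rule ennreal_suminf_neq_top[OF c]) simp
    then show ?thesis by (simp add: less_top)
  qed
  finally show ?thesis unfolding S_Lp_conv_def .
qed

lemma S1_d_conv_if_summable_bound:
  assumes rv: "rv_setting M X Xs"
    and bound: "\<And>n \<omega>. \<omega> \<in> space M \<Longrightarrow> \<bar>Xs n \<omega> - X \<omega>\<bar> \<le> c n" and c: "summable c"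
  shows "S1_d_conv M Xs X"
  unfolding S1_d_conv_def
proof (intro allI impI)
  interpret prob_space M using rv by (simp add: rv_setting_def)
  have [measurable]: "X \<in> borel_measurable M" "Xs n \<in> borel_measurable M" for n
    using rv by (auto simp: rv_setting_def)
  fix f :: "real \<Rightarrow> real"
  assume "bounded (range f) \<and> (\<exists>L. \<forall>x y. \<bar>f x - f y\<bar> \<le> L * \<bar>x - y\<bar>)"
  then obtain L B where B: "\<And>x. \<bar>f x\<bar> \<le> B" and L: "\<And>x y. \<bar>f x - f y\<bar> \<le> L * \<bar>x - y\<bar>"
    by (auto simp: bounded_iff)
  have L0: "0 \<le> L"
    using order_trans[OF abs_ge_zero L[of 1 0]] by simp
  have "L-lipschitz_on UNIV f"
    using L L0 by (simp add: lipschitz_on_def dist_real_def)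
  then have [measurable]: "f \<in> borel_measurable borel"
    by (intro borel_measurable_continuous_onI lipschitz_on_continuous_on)
  have int: "integrable M (\<lambda>\<omega>. f (Y \<omega>))" if [measurable]: "Y \<in> borel_measurable M" for Y
    using B by (intro integrable_const_bound[where B=B]) auto
  have "\<bar>(\<integral>\<omega>. f (Xs n \<omega>) \<partial>M) - (\<integral>\<omega>. f (X \<omega>) \<partial>M)\<bar> \<le> L * c n" for n
  proof -
    have "\<bar>(\<integral>\<omega>. f (Xs n \<omega>) \<partial>M) - (\<integral>\<omega>. f (X \<omega>) \<partial>M)\<bar> = \<bar>\<integral>\<omega>. f (Xs n \<omega>) - f (X \<omega>) \<partial>M\<bar>"
      by (simp add: int)
    also have "\<dots> \<le> (\<integral>\<omega>. \<bar>f (Xs n \<omega>) - f (X \<omega>)\<bar> \<partial>M)"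
      by (rule integral_abs_bound)
    also have "\<dots> \<le> (\<integral>\<omega>. L * c n \<partial>M)"
    proof (rule integral_mono)
      show "integrable M (\<lambda>\<omega>. \<bar>f (Xs n \<omega>) - f (X \<omega>)\<bar>)"
        by (intro integrable_abs Bochner_Integration.integrable_diff int) measurable
      fix \<omega> assume "\<omega> \<in> space M"
      then show "\<bar>f (Xs n \<omega>) - f (X \<omega>)\<bar> \<le> L * c n"
        using L[of "Xs n \<omega>" "X \<omega>"] mult_left_mono[OF bound L0] by (meson order_trans)
    qed simp
    finally show ?thesis by (simp add: prob_space)
  qed
  then show "summable (\<lambda>n. \<bar>(\<integral>\<omega>. f (Xs n \<omega>) \<partial>M) - (\<integral>\<omega>. f (X \<omega>) \<partial>M)\<bar>)"
    by (intro summable_comparison_test'[OF summable_mult[OF c]]) auto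
qed

lemma S_as_conv_if_eventually_equal:
  assumes "AE \<omega> in M. \<forall>\<^sub>F n in sequentially. Xs n \<omega> = X \<omega>"
  shows "S_as_conv \<alpha> M Xs X"
  unfolding S_as_conv_def using assms
proof (rule AE_mp, intro AE_I2 impI)
  fix \<omega> assume "\<forall>\<^sub>F n in sequentially. Xs n \<omega> = X \<omega>"
  then have "\<forall>\<^sub>F n in sequentially. \<bar>Xs n \<omega> - X \<omega>\<bar> powr \<alpha> = 0"
    by eventually_elim simp
  then show "summable (\<lambda>n. \<bar>Xs n \<omega> - X \<omega>\<bar> powr \<alpha>)"
    by (rule summable_if_eventually_zero)
qed

definition clamp01 :: "real \<Rightarrow> real" where "clamp01 x = max 0 (min 1 x)"

lemma not_S1_d_conv_if_clamp01:
  assumes "\<not> summable (\<lambda>n. \<bar>(\<integral>\<omega>. clamp01 (Xs n \<omega>) \<partial>M) - (\<integral>\<omega>. clamp01 (X \<omega>) \<partial>M)\<bar>)"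
  shows "\<not> S1_d_conv M Xs X"
proof -
  have "bounded (range clamp01)"
    by (rule bounded_subset[OF bounded_closed_interval[of 0 1]]) (auto simp: clamp01_def)
  moreover have "\<forall>x y. \<bar>clamp01 x - clamp01 y\<bar> \<le> 1 * \<bar>x - y\<bar>"
    by (auto simp: clamp01_def)
  ultimately show ?thesis using assms unfolding S1_d_conv_def by blast
qed

definition inv_succ :: "nat \<Rightarrow> real" where "inv_succ n = inverse (real (Suc n))"

lemma inv_succ_pos: "0 < inv_succ n" and inv_succ_le_1: "inv_succ n \<le> 1"
  unfolding inv_succ_def by (auto simp: inverse_le_1_iff)

lemma inv_succ_tendsto_0: "inv_succ \<longlonglongrightarrow> 0"
  unfolding inv_succ_def by (rule LIMSEQ_inverse_real_of_nat)

lemma not_summable_inv_succ: "\<not> summable inv_succ"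
  using not_summable_harmonic[where 'a=real] summable_Suc_iff[of "\<lambda>n. inverse (real n)"]
  by (simp add: inv_succ_def[abs_def])

lemma summable_inv_succ_squared: "summable (\<lambda>n. (inv_succ n)\<^sup>2)"
  using inverse_power_summable[of 2, where 'a=real] summable_Suc_iff[of "\<lambda>n. inverse (real n ^ 2)"]
  by (simp add: inv_succ_def power_inverse)

definition unit_uniform :: "real measure" where "unit_uniform = uniform_measure lborel {0..1}"

lemma prob_space_unit_uniform: "prob_space unit_uniform"
  unfolding unit_uniform_def by (rule prob_space_uniform_measure) auto

lemma space_unit_uniform [simp]: "space unit_uniform = UNIV"
  and sets_unit_uniform [simp]: "sets unit_uniform = sets borel"
  unfolding unit_uniform_def by auto

lemma measure_unit_uniform_UNIV [simp]: "measure unit_uniform UNIV = 1"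
  using prob_space.prob_space[OF prob_space_unit_uniform] by simp

lemma measure_unit_uniform:
  "B \<in> sets borel \<Longrightarrow> measure unit_uniform B = measure lborel ({0..1} \<inter> B)"
  unfolding unit_uniform_def by (subst measure_uniform_measure) auto

lemma borel_measurable_unit_uniform [measurable]:
  "f \<in> borel_measurable borel \<Longrightarrow> f \<in> borel_measurable unit_uniform"
  unfolding measurable_cong_sets[OF sets_unit_uniform refl] .

lemma cdf_of_unit_uniform_square:
  assumes "0 \<le> t" "t \<le> 1"
  shows "cdf_of unit_uniform (\<lambda>\<omega>. \<omega>\<^sup>2) (t\<^sup>2) = t"
proof -
  have "{0..1} \<inter> {\<omega>. \<omega>\<^sup>2 \<le> t\<^sup>2} = {0..t}"
    using assms by (auto simp flip: abs_le_square_iff)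
  moreover have "{\<omega>::real. \<omega>\<^sup>2 \<le> t\<^sup>2} \<in> sets borel" by measurable
  ultimately show ?thesis
    using assms by (simp add: cdf_of_def measure_unit_uniform)
qed

lemma shifted_square_example:
  defines "X \<equiv> \<lambda>\<omega>::real. \<omega>\<^sup>2" and "Xs \<equiv> \<lambda>n \<omega>. \<omega>\<^sup>2 - (inv_succ n)\<^sup>2"
  shows "rv_setting unit_uniform X Xs" and "S_Linf_conv unit_uniform Xs X"
    and "S_Lp_conv 1 unit_uniform Xs X" and "complete_conv unit_uniform Xs X"
    and "S1_d_conv unit_uniform Xs X" and "\<not> S2_d_conv unit_uniform Xs X"
proof -
  show rv: "rv_setting unit_uniform X Xs"
    unfolding rv_setting_def X_def Xs_def by (simp add: prob_space_unit_uniform)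
  have bound: "\<bar>Xs n \<omega> - X \<omega>\<bar> \<le> (inv_succ n)\<^sup>2" for n \<omega>
    by (simp add: X_def Xs_def)
  note summable = summable_inv_succ_squared
  show "S_Linf_conv unit_uniform Xs X"
    using rv bound summable by (rule S_Linf_conv_if_summable_bound)
  show "S_Lp_conv 1 unit_uniform Xs X"
    using prob_space_unit_uniform _ bound by (rule S_Lp_conv_if_summable_bound) (simp_all add: summable)
  show "complete_conv unit_uniform Xs X"
    using bound summable_LIMSEQ_zero[OF summable] by (rule complete_conv_if_uniform_bound)
  show "S1_d_conv unit_uniform Xs X"
    using rv bound summable by (rule S1_d_conv_if_summable_bound)
  have "isCont (cdf_of unit_uniform X) 0"
  proof (subst isCont_cdf_of_iff[OF prob_space_unit_uniform])
    show "X \<in> borel_measurable unit_uniform"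
      unfolding X_def by simp
    have "{\<omega> \<in> space unit_uniform. X \<omega> = 0} = {0}"
      by (auto simp: X_def)
    then show "measure unit_uniform {\<omega> \<in> space unit_uniform. X \<omega> = 0} = 0"
      by (simp add: measure_unit_uniform)
  qed
  moreover have "cdf_of unit_uniform X 0 = 0"
    using cdf_of_unit_uniform_square[of 0] by (simp add: X_def)
  moreover have "cdf_of unit_uniform (Xs n) 0 = inv_succ n" for n
    using cdf_of_unit_uniform_square[OF less_imp_le[OF inv_succ_pos] inv_succ_le_1]
    by (simp add: X_def Xs_def cdf_of_diff_const)
  ultimately show "\<not> S2_d_conv unit_uniform Xs X"
    using not_summable_inv_succ inv_succ_pos unfolding S2_d_conv_def by (fastforce simp: abs_of_pos)
qed

lemma constant_example:
  defines "X \<equiv> \<lambda>_::real. 0::real" and "Xs \<equiv> \<lambda>n (_::real). inv_succ n"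
  shows "rv_setting unit_uniform X Xs" and "S2_d_conv unit_uniform Xs X"
    and "complete_conv unit_uniform Xs X" and "\<not> S1_d_conv unit_uniform Xs X"
proof -
  show "rv_setting unit_uniform X Xs"
    unfolding rv_setting_def X_def Xs_def by (simp add: prob_space_unit_uniform)
  show "S2_d_conv unit_uniform Xs X"
    unfolding X_def Xs_def using prob_space_unit_uniform inv_succ_tendsto_0 by (rule S2_d_conv_const)
  show "complete_conv unit_uniform Xs X"
    using _ inv_succ_tendsto_0 by (rule complete_conv_if_uniform_bound)
      (simp add: X_def Xs_def abs_of_pos inv_succ_pos)
  show "\<not> S1_d_conv unit_uniform Xs X"
    using not_summable_inv_succ inv_succ_pos inv_succ_le_1
    by (intro not_S1_d_conv_if_clamp01) (simp add: X_def Xs_def clamp01_def abs_of_pos)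
qed

lemma shrinking_indicator_example:
  defines "X \<equiv> \<lambda>_::real. 0::real" and "Xs \<equiv> \<lambda>n \<omega>. indicator {0<..inv_succ n} \<omega> :: real"
  shows "rv_setting unit_uniform X Xs" and "S_as_conv \<alpha> unit_uniform Xs X"
    and "\<not> S1_d_conv unit_uniform Xs X"
proof -
  show "rv_setting unit_uniform X Xs"
    unfolding rv_setting_def X_def Xs_def by (simp add: prob_space_unit_uniform)
  have "\<forall>\<^sub>F n in sequentially. Xs n \<omega> = X \<omega>" for \<omega>
  proof (cases "\<omega> > 0")
    case True
    then show ?thesis
      using order_tendstoD(2)[OF inv_succ_tendsto_0 True]
      by (auto simp: X_def Xs_def elim: eventually_mono)
  qed (simp add: X_def Xs_def)
  then show "S_as_conv \<alpha> unit_uniform Xs X"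
    by (intro S_as_conv_if_eventually_equal AE_I2)
  have "(\<integral>\<omega>. clamp01 (Xs n \<omega>) \<partial>unit_uniform) = inv_succ n" for n
  proof -
    have "clamp01 (Xs n \<omega>) = indicator {0<..inv_succ n} \<omega>" for \<omega>
      by (simp add: Xs_def clamp01_def indicator_def)
    moreover have "{0..1} \<inter> {0<..inv_succ n} = {0<..inv_succ n}"
      using inv_succ_le_1[of n] by auto
    ultimately show ?thesis
      using inv_succ_pos[of n] by (simp add: measure_unit_uniform)
  qed
  then show "\<not> S1_d_conv unit_uniform Xs X"
    using not_summable_inv_succ inv_succ_pos
    by (intro not_S1_d_conv_if_clamp01) (simp add: X_def clamp01_def abs_of_pos)
qed

theorem proposition2p1:
  shows
  "((\<exists>(M::real measure) X Xs. rv_setting M X Xs \<and> S1_d_conv M Xs X \<and> \<not> S2_d_conv M Xs X) \<and>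
    (\<exists>(M::real measure) X Xs. rv_setting M X Xs \<and> S2_d_conv M Xs X \<and> \<not> S1_d_conv M Xs X))
   \<and> (\<exists>(M::real measure) X Xs. rv_setting M X Xs \<and> S_Linf_conv M Xs X \<and> \<not> S2_d_conv M Xs X)
   \<and> (\<exists>(M::real measure) X Xs. rv_setting M X Xs \<and> S_Lp_conv 1 M Xs X \<and> \<not> S2_d_conv M Xs X)
   \<and> (\<forall>\<alpha>::real. \<alpha> > 0 \<longrightarrow>
        (\<exists>(M::real measure) X Xs. rv_setting M X Xs \<and> S_as_conv \<alpha> M Xs X \<and> \<not> S1_d_conv M Xs X))
   \<and> (\<exists>(M::real measure) X Xs. rv_setting M X Xs \<and> complete_conv M Xs X \<and> \<not> S1_d_conv M Xs X)
   \<and> (\<exists>(M::real measure) X Xs. rv_setting M X Xs \<and> complete_conv M Xs X \<and> \<not> S2_d_conv M Xs X)"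
  by (intro conjI allI impI)
    (use shifted_square_example constant_example shrinking_indicator_example in blast)+

end
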